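(* Let $k>0$ be an integer and let $p$ be the unique positive real solution of $p^k+p-1=0$. For every instance of shuffled adversarial multi-agent delegation with $k$ agents and $n$ (not necessarily identically distributed) elements assigned uniformly at random to the agents, there exists a threshold mechanism $M$ such that, when the agents behave adversarially under $M$, $\mathbb{E}[\mathrm{Principal}]\ge p\,\mathbb{E}[\mathrm{Opt}]$, where $\mathrm{Opt}=\max_{e\in E}x(V(e))$ and the expectations are also over the random assignment.
   Context: Shuffled multi-agent delegation: there is a pool $E$ of $n$ elements; each element $e$ has a random outcome $V(e)$ drawn from a distribution $\mu(e)$ over its own outcome set $\Omega(e)$ (disjoint across elements), the $V(e)$ being mutually independent; each outcome $\omega$ has principal utility $x(\omega)\ge0$. Each element is given to a uniformly random one of the $k$ agents, independently of the other elements. Each agent knows which elements it received and observes their realized outcomes; the principal does not know the assignment, so its mechanism is fixed without it. Distributions are common knowledge. Single-proposal mechanism: the principal commits to acceptable sets of outcomes and a deterministic tie-breaking order on elements; each agent proposes one of its elements together with its observed outcome; the principal accepts, among acceptable proposed outcomes, one maximizing $x$ (ties broken by the order), and rejects if none; the principal gets $x(\omega)$ for an accepted truly observed outcome $\omega$, and $0$ otherwise. A threshold mechanism is a single-proposal mechanism given by a map $\theta:E\to\mathbb{R}$ such that an outcome $\omega$ of element $e$ is acceptable iff $x(\omega)\ge\theta(e)$ (strict thresholds $x(\omega)>\theta(e)$ are also allowed). Adversarial behavior: each agent chooses its action to minimize the principal's expected utility subject to keeping a positive probability of being the agent whose outcome is accepted. $\mathrm{Principal}$ denotes the principal's (random)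 utility. *)

theory Defs
  imports "HOL-Probability.Probability"
begin

text \<open>Outcomes of element e are values of type 'o; the
  outcome set of e is formally tagged by e (utility x e o), so outcome sets are disjoint.
  Agents are 0,...,k-1.  A state is a pair (sigma, V) of an assignment sigma : 'e => nat and
  the realized outcomes V : 'e => 'o.\<close>

type_synonym ('e,'o) state = "('e \<Rightarrow> nat) \<times> ('e \<Rightarrow> 'o)"

definition joint_pmf :: "'e set \<Rightarrow> nat \<Rightarrow> ('e \<Rightarrow> 'o pmf) \<Rightarrow> ('e,'o) state pmf" where
  "joint_pmf E k \<mu> =
     pair_pmf (Pi_pmf E 0 (\<lambda>_. pmf_of_set {..<k})) (Pi_pmf E undefined \<mu>)"

definition agent_set :: "'e set \<Rightarrow> ('e,'o) state \<Rightarrow> nat \<Rightarrow> 'e set" where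
  "agent_set E \<omega> i = {e \<in> E. fst \<omega> e = i}"

definition info :: "'e set \<Rightarrow> ('e,'o) state \<Rightarrow> nat \<Rightarrow> 'e set \<times> ('e \<Rightarrow> 'o)" where
  "info E \<omega> i = (agent_set E \<omega> i, restrict (snd \<omega>) (agent_set E \<omega> i))"

text \<open>A strategy profile: agent i maps its information to a proposal (None = no proposal).\<close>
type_synonym ('e,'o) profile = "nat \<Rightarrow> 'e set \<Rightarrow> ('e \<Rightarrow> 'o) \<Rightarrow> 'e option"

definition valid_action :: "'e set \<Rightarrow> ('e,'o) state \<Rightarrow> nat \<Rightarrow> 'e option \<Rightarrow> bool" where
  "valid_action E \<omega> i a \<longleftrightarrow> a = None \<or> (\<exists>e. a = Some e \<and> e \<in> agent_set E \<omega> i)"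

definition profile_acts :: "'e set \<Rightarrow> ('e,'o) profile \<Rightarrow> ('e,'o) state \<Rightarrow> nat \<Rightarrow> 'e option" where
  "profile_acts E s \<omega> = (\<lambda>j. case_prod (s j) (info E \<omega> j))"

definition threshold_acc ::
  "('e \<Rightarrow> 'o \<Rightarrow> real) \<Rightarrow> ('e \<Rightarrow> real) \<Rightarrow> ('e \<Rightarrow> bool) \<Rightarrow> 'e \<Rightarrow> 'o \<Rightarrow> bool" where
  "threshold_acc x \<theta> strict e v \<longleftrightarrow> (if strict e then x e v > \<theta> e else x e v \<ge> \<theta> e)"

definition acc_props :: "'e set \<Rightarrow> nat \<Rightarrow> ('e \<Rightarrow> 'o \<Rightarrow> bool) \<Rightarrow> ('e,'o) state
    \<Rightarrow> (nat \<Rightarrow> 'e option) \<Rightarrow> 'e set" where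
  "acc_props E k acc \<omega> A =
     {e \<in> E. \<exists>j<k. A j = Some e \<and> fst \<omega> e = j \<and> acc e (snd \<omega> e)}"

definition is_winner :: "('e \<Rightarrow> 'o \<Rightarrow> real) \<Rightarrow> ('e \<Rightarrow> nat) \<Rightarrow> 'e set \<Rightarrow> ('e \<Rightarrow> 'o) \<Rightarrow> 'e \<Rightarrow> bool" where
  "is_winner x rk P V e \<longleftrightarrow> e \<in> P \<and>
     (\<forall>e'\<in>P. x e' (V e') < x e (V e) \<or> (x e' (V e') = x e (V e) \<and> rk e \<le> rk e'))"

definition accepted :: "'e set \<Rightarrow> nat \<Rightarrow> ('e \<Rightarrow> 'o \<Rightarrow> real) \<Rightarrow> ('e \<Rightarrow> 'o \<Rightarrow> bool) \<Rightarrow> ('e \<Rightarrow> nat)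
    \<Rightarrow> ('e,'o) state \<Rightarrow> (nat \<Rightarrow> 'e option) \<Rightarrow> 'e option" where
  "accepted E k x acc rk \<omega> A =
     (let P = acc_props E k acc \<omega> A in
      if \<exists>e. is_winner x rk P (snd \<omega>) e then Some (THE e. is_winner x rk P (snd \<omega>) e)
      else None)"

definition principal :: "'e set \<Rightarrow> nat \<Rightarrow> ('e \<Rightarrow> 'o \<Rightarrow> real) \<Rightarrow> ('e \<Rightarrow> 'o \<Rightarrow> bool) \<Rightarrow> ('e \<Rightarrow> nat)
    \<Rightarrow> ('e,'o) state \<Rightarrow> (nat \<Rightarrow> 'e option) \<Rightarrow> real" where
  "principal E k x acc rk \<omega> A =
     (case accepted E k x acc rk \<omega> A of None \<Rightarrow> 0 | Some e \<Rightarrow> x e (snd \<omega> e))"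

definition accepted_agent :: "'e set \<Rightarrow> nat \<Rightarrow> ('e \<Rightarrow> 'o \<Rightarrow> real) \<Rightarrow> ('e \<Rightarrow> 'o \<Rightarrow> bool)
    \<Rightarrow> ('e \<Rightarrow> nat) \<Rightarrow> ('e,'o) state \<Rightarrow> (nat \<Rightarrow> 'e option) \<Rightarrow> nat option" where
  "accepted_agent E k x acc rk \<omega> A = map_option (fst \<omega>) (accepted E k x acc rk \<omega> A)"

text \<open>If no action has positive acceptance probability, the action is only
  required to be valid.\<close>
definition adversarial :: "'e set \<Rightarrow> nat \<Rightarrow> ('e \<Rightarrow> 'o pmf) \<Rightarrow> ('e \<Rightarrow> 'o \<Rightarrow> real)
    \<Rightarrow> ('e \<Rightarrow> 'o \<Rightarrow> bool) \<Rightarrow> ('e \<Rightarrow> nat) \<Rightarrow> ('e,'o) profile \<Rightarrow> bool" where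
  "adversarial E k \<mu> x acc rk s \<longleftrightarrow>
     (\<forall>\<omega>\<in>set_pmf (joint_pmf E k \<mu>). \<forall>i<k.
        valid_action E \<omega> i (profile_acts E s \<omega> i) \<and>
        (let C = cond_pmf (joint_pmf E k \<mu>) {\<omega>'. info E \<omega>' i = info E \<omega> i};
             Feas = {a. valid_action E \<omega> i a \<and>
                        measure_pmf.prob C
                          {\<omega>'. accepted_agent E k x acc rk \<omega>' ((profile_acts E s \<omega>')(i := a)) = Some i}
                        > 0}
         in Feas \<noteq> {} \<longrightarrow>
            (profile_acts E s \<omega> i \<in> Feas \<and>
             (\<forall>a\<in>Feas.
                measure_pmf.expectation C (\<lambda>\<omega>'. principal E k x acc rk \<omega>' (profile_acts E s \<omega>'))
                \<le> measure_pmf.expectation C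
                     (\<lambda>\<omega>'. principal E k x acc rk \<omega>' ((profile_acts E s \<omega>')(i := a)))))))"

text \<open>Opt = max over elements of realized utility (0 inserted; irrelevant as x >= 0).\<close>
definition opt :: "'e set \<Rightarrow> ('e \<Rightarrow> 'o \<Rightarrow> real) \<Rightarrow> ('e,'o) state \<Rightarrow> real" where
  "opt E x \<omega> = Max (insert 0 ((\<lambda>e. x e (snd \<omega> e)) ` E))"

end

theory Submission
  imports Defs
begin

(* The mechanism uses one threshold tau for every element, weak on a set W and strict elsewhere;
   write q e for the probability that e is acceptable.  An adversarial agent holding an acceptable
   element either proposes an acceptable element of its own, or an acceptable proposal of another
   agent beats that element (otherwise proposing it would win with positive conditional
   probability).  Hence the principal gets at least tau whenever some element is acceptable, and
   the full value of the best element whenever it exceeds tau and no other acceptable element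
   shares its agent.  With M the expected excess of the best element over tau, independence of
   the outcomes and of the uniform assignment give
     E[Principal] >= tau (1 - prod (1 - q e)) + prod (1 - q e / k) M   and   E[Opt] <= tau + M.
   Choose tau so that prod (1 - q e) is at most 1 - p for the weak and at least 1 - p for the
   strict thresholds.  The bound is affine in each q e, so some choice of W does at least as well
   as the interpolating point with prod (1 - q e) = 1 - p = p ^ k, where Bernoulli's inequality
   gives prod (1 - q e / k) >= p. *)

section \<open>Winners of a single-proposal mechanism\<close>

lemma ex_is_winner:
  assumes "finite P" "P \<noteq> {}"
  shows "\<exists>e. is_winner x rk P V e"
proof -
  define m where "m = Max ((\<lambda>e. x e (V e)) ` P)"
  define P' where "P' = {e\<in>P. x e (V e) = m}"
  have "m \<in> (\<lambda>e. x e (V e)) ` P" unfolding m_def using assms by (intro Max_in) auto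
  then have P'_ne: "P' \<noteq> {}" unfolding P'_def by auto
  have fin_P': "finite P'" unfolding P'_def using assms by auto
  have "Min (rk ` P') \<in> rk ` P'" using P'_ne fin_P' by (intro Min_in) auto
  then obtain e0 where e0: "e0 \<in> P'" "rk e0 = Min (rk ` P')" by (metis imageE)
  have "is_winner x rk P V e0"
    unfolding is_winner_def
  proof (intro conjI ballI)
    show "e0 \<in> P" using e0 unfolding P'_def by auto
    fix e' assume e': "e' \<in> P"
    have le: "x e' (V e') \<le> m" unfolding m_def using assms e' by (intro Max_ge) auto
    have eq: "x e0 (V e0) = m" using e0(1) unfolding P'_def by simp
    show "x e' (V e') < x e0 (V e0) \<or> x e' (V e') = x e0 (V e0) \<and> rk e0 \<le> rk e'"
    proof (cases "x e' (V e') = m")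
      case True
      then have "rk e0 \<le> rk e'" unfolding e0(2) using e' fin_P' by (intro Min_le) (auto simp: P'_def)
      then show ?thesis using True eq by simp
    qed (use le eq in simp)
  qed
  then show ?thesis by blast
qed

lemma is_winner_unique:
  assumes "inj_on rk P" "is_winner x rk P V a" "is_winner x rk P V b"
  shows "a = b"
proof -
  have a: "a \<in> P" and b: "b \<in> P" using assms(2,3) unfolding is_winner_def by simp_all
  have "x b (V b) < x a (V a) \<or> x b (V b) = x a (V a) \<and> rk a \<le> rk b"
    using assms(2) b unfolding is_winner_def by blast
  moreover have "x a (V a) < x b (V b) \<or> x a (V a) = x b (V b) \<and> rk b \<le> rk a"
    using assms(3) a unfolding is_winner_def by blast
  ultimately have "rk a = rk b" by auto
  then show ?thesis using assms(1) a b by (auto dest: inj_onD)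
qed

lemma is_winner_ge:
  assumes "is_winner x rk P V w" "e \<in> P"
  shows "x e (V e) \<le> x w (V w)"
proof -
  have "x e (V e) < x w (V w) \<or> x e (V e) = x w (V w) \<and> rk w \<le> rk e"
    using assms unfolding is_winner_def by blast
  then show ?thesis by linarith
qed

lemma acc_props_subset: "acc_props E k acc \<omega> A \<subseteq> E"
  unfolding acc_props_def by auto

lemma accepted_eq_Some_iff:
  assumes "finite E" "inj_on rk E"
  shows "accepted E k x acc rk \<omega> A = Some w \<longleftrightarrow> is_winner x rk (acc_props E k acc \<omega> A) (snd \<omega>) w"
proof -
  let ?W = "is_winner x rk (acc_props E k acc \<omega> A) (snd \<omega>)"
  have inj: "inj_on rk (acc_props E k acc \<omega> A)"
    using assms(2) acc_props_subset inj_on_subset by metis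
  show ?thesis
  proof
    assume "accepted E k x acc rk \<omega> A = Some w"
    then have "\<exists>e. ?W e" "w = (THE e. ?W e)" unfolding accepted_def Let_def by (auto split: if_splits)
    then show "?W w" using is_winner_unique[OF inj] by (metis theI)
  next
    assume "?W w"
    then have "(THE e. ?W e) = w" using is_winner_unique[OF inj] by blast
    then show "accepted E k x acc rk \<omega> A = Some w" using \<open>?W w\<close> unfolding accepted_def Let_def by auto
  qed
qed

lemma principal_ge_acc_props:
  assumes "finite E" "inj_on rk E" "e \<in> acc_props E k acc \<omega> A"
  shows "x e (snd \<omega> e) \<le> principal E k x acc rk \<omega> A"
proof -
  have "finite (acc_props E k acc \<omega> A)"
    using assms(1) acc_props_subset finite_subset by metis
  then obtain w where w: "is_winner x rk (acc_props E k acc \<omega> A) (snd \<omega>) w"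
    using ex_is_winner assms(3) by blast
  then have "accepted E k x acc rk \<omega> A = Some w"
    using accepted_eq_Some_iff[OF assms(1,2)] by blast
  moreover have "x e (snd \<omega> e) \<le> x w (snd \<omega> w)"
    using w assms(3) by (rule is_winner_ge)
  ultimately show ?thesis unfolding principal_def by simp
qed

lemma principal_nonneg:
  assumes "\<forall>e v. x e v \<ge> 0"
  shows "0 \<le> principal E k x acc rk \<omega> A"
  unfolding principal_def using assms by (auto split: option.splits)

section \<open>Adversarial agents\<close>

lemma info_eqD:
  assumes "info E \<omega>' i = info E \<omega> i"
  shows "agent_set E \<omega>' i = agent_set E \<omega> i"
    and "e \<in> agent_set E \<omega> i \<Longrightarrow> snd \<omega>' e = snd \<omega> e"
    and "profile_acts E s \<omega>' i = profile_acts E s \<omega> i"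
proof -
  show agents: "agent_set E \<omega>' i = agent_set E \<omega> i" using assms unfolding info_def by auto
  show "e \<in> agent_set E \<omega> i \<Longrightarrow> snd \<omega>' e = snd \<omega> e"
    using assms agents unfolding info_def by (metis prod.inject restrict_apply')
  show "profile_acts E s \<omega>' i = profile_acts E s \<omega> i"
    unfolding profile_acts_def using assms by simp
qed

lemma accepted_agent_proposes_acceptable:
  assumes "finite E" "inj_on rk E" "i < k"
    and "accepted_agent E k x acc rk \<omega>' (profile_acts E s \<omega>') = Some i"
    and info: "info E \<omega>' i = info E \<omega> i"
  shows "\<exists>w\<in>acc_props E k acc \<omega> (profile_acts E s \<omega>). fst \<omega> w = i"
proof -
  obtain w where w: "accepted E k x acc rk \<omega>' (profile_acts E s \<omega>') = Some w" "fst \<omega>' w = i"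
    using assms(4) unfolding accepted_agent_def by auto
  then have "w \<in> acc_props E k acc \<omega>' (profile_acts E s \<omega>')"
    using accepted_eq_Some_iff[OF assms(1,2)] unfolding is_winner_def by blast
  then have "profile_acts E s \<omega>' i = Some w" "w \<in> agent_set E \<omega>' i" "acc w (snd \<omega>' w)"
    using w(2) unfolding acc_props_def agent_set_def by auto
  then have "profile_acts E s \<omega> i = Some w" "w \<in> agent_set E \<omega> i" "acc w (snd \<omega> w)"
    using info_eqD[OF info] by auto
  then show ?thesis using assms(3) unfolding acc_props_def agent_set_def by auto
qed

lemma ex_better_rival_proposal:
  assumes "finite E" "inj_on rk E" "i < k" "e \<in> agent_set E \<omega> i" "acc e (snd \<omega> e)"
    and lost: "accepted_agent E k x acc rk \<omega> (A(i := Some e)) \<noteq> Some i"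
  shows "\<exists>w\<in>acc_props E k acc \<omega> A. x e (snd \<omega> e) \<le> x w (snd \<omega> w)"
proof -
  let ?P = "acc_props E k acc \<omega> (A(i := Some e))"
  have e: "e \<in> ?P" using assms(3-5) unfolding acc_props_def agent_set_def by auto
  have "finite ?P" using assms(1) acc_props_subset finite_subset by metis
  then obtain w where w: "is_winner x rk ?P (snd \<omega>) w" using ex_is_winner e by blast
  then have "accepted E k x acc rk \<omega> (A(i := Some e)) = Some w"
    using accepted_eq_Some_iff[OF assms(1,2)] by blast
  then have "fst \<omega> w \<noteq> i" using lost unfolding accepted_agent_def by auto
  moreover have "w \<in> ?P" using w unfolding is_winner_def by blast
  ultimately have "w \<in> acc_props E k acc \<omega> A" unfolding acc_props_def by auto
  moreover have "x e (snd \<omega> e) \<le> x w (snd \<omega> w)" using w e by (rule is_winner_ge)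
  ultimately show ?thesis by blast
qed

lemma set_pmf_of_set_lessThan [simp]: "0 < (k::nat) \<Longrightarrow> set_pmf (pmf_of_set {..<k}) = {..<k}"
  by (intro set_pmf_of_set) auto

lemma joint_pmf_assignment_less:
  assumes "finite E" "k > 0" "\<omega> \<in> set_pmf (joint_pmf E k \<mu>)" "e \<in> E"
  shows "fst \<omega> e < k"
proof -
  have "fst \<omega> \<in> set_pmf (Pi_pmf E 0 (\<lambda>_. pmf_of_set {..<k}))"
    using assms(3) unfolding joint_pmf_def by auto
  then have "fst \<omega> e \<in> set_pmf (pmf_of_set {..<k})"
    using assms(4) unfolding set_Pi_pmf[OF assms(1)] PiE_dflt_def by auto
  then show ?thesis using assms(2) by simp
qed

(* Either the agent of e wins with positive conditional probability by proposing e, and then its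
   own (adversarial) proposal must be acceptable; or proposing e wins with probability 0 given its
   information, so it loses in the actual state, which has positive conditional probability. *)
lemma adversarial_proposals_cover:
  assumes fin: "finite E" and inj: "inj_on rk E" and k: "k > 0"
    and adv: "adversarial E k \<mu> x acc rk s"
    and \<omega>: "\<omega> \<in> set_pmf (joint_pmf E k \<mu>)" and e: "e \<in> E" "acc e (snd \<omega> e)"
  shows "\<exists>e'\<in>acc_props E k acc \<omega> (profile_acts E s \<omega>).
           fst \<omega> e' = fst \<omega> e \<or> x e (snd \<omega> e) \<le> x e' (snd \<omega> e')"
proof -
  define i where "i = fst \<omega> e"
  have i: "i < k" unfolding i_def using joint_pmf_assignment_less[OF fin k \<omega> e(1)] .
  have e_i: "e \<in> agent_set E \<omega> i" unfolding agent_set_def i_def using e by auto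
  let ?C = "cond_pmf (joint_pmf E k \<mu>) {\<omega>'. info E \<omega>' i = info E \<omega> i}"
  let ?Won = "\<lambda>a. {\<omega>'. accepted_agent E k x acc rk \<omega>' ((profile_acts E s \<omega>')(i := a)) = Some i}"
  let ?win = "\<lambda>a. measure_pmf.prob ?C (?Won a)"
  have set_C: "set_pmf ?C = set_pmf (joint_pmf E k \<mu>) \<inter> {\<omega>'. info E \<omega>' i = info E \<omega> i}"
    using \<omega> by (intro set_cond_pmf) auto
  have adv_i: "(\<exists>a. valid_action E \<omega> i a \<and> 0 < ?win a) \<longrightarrow> 0 < ?win (profile_acts E s \<omega> i)"
    using adv[unfolded adversarial_def Let_def, rule_format, OF \<omega> i] by blast
  show ?thesis
  proof (cases "0 < ?win (Some e)")
    case True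
    then have "0 < ?win (profile_acts E s \<omega> i)"
      using adv_i e_i unfolding valid_action_def by blast
    then have "set_pmf ?C \<inter> ?Won (profile_acts E s \<omega> i) \<noteq> {}"
      unfolding measure_pmf_zero_iff[symmetric] by simp
    then obtain \<omega>' where \<omega>': "\<omega>' \<in> set_pmf ?C" and won: "\<omega>' \<in> ?Won (profile_acts E s \<omega> i)"
      by blast
    have info: "info E \<omega>' i = info E \<omega> i" using \<omega>' set_C by auto
    then have "accepted_agent E k x acc rk \<omega>' (profile_acts E s \<omega>') = Some i"
      using won info_eqD(3)[OF info, of s, symmetric] by simp
    then show ?thesis
      using accepted_agent_proposes_acceptable[OF fin inj i _ info] unfolding i_def by blast
  next
    case False
    then have "?win (Some e) = 0" using measure_nonneg[of ?C "?Won (Some e)"] by linarith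
    then have "set_pmf ?C \<inter> ?Won (Some e) = {}"
      by (simp only: measure_pmf_zero_iff)
    then have "accepted_agent E k x acc rk \<omega> ((profile_acts E s \<omega>)(i := Some e)) \<noteq> Some i"
      using \<omega> set_C by auto
    then show ?thesis using ex_better_rival_proposal[where acc=acc, OF fin inj i e_i e(2)] by blast
  qed
qed

section \<open>Pointwise bounds\<close>

definition ranks_below :: "('e \<Rightarrow> 'o \<Rightarrow> real) \<Rightarrow> ('e \<Rightarrow> nat) \<Rightarrow> 'e \<Rightarrow> 'o \<Rightarrow> 'e \<Rightarrow> 'o \<Rightarrow> bool" where
  "ranks_below x rk e' w e v \<longleftrightarrow> x e' w < x e v \<or> (x e' w = x e v \<and> rk e < rk e')"

definition is_top :: "'e set \<Rightarrow> ('e \<Rightarrow> 'o \<Rightarrow> real) \<Rightarrow> ('e \<Rightarrow> nat) \<Rightarrow> ('e \<Rightarrow> 'o) \<Rightarrow> 'e \<Rightarrow> bool" where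
  "is_top E x rk V e \<longleftrightarrow> (\<forall>e'\<in>E - {e}. ranks_below x rk e' (V e') e (V e))"

definition top_gain :: "'e set \<Rightarrow> ('e \<Rightarrow> 'o \<Rightarrow> real) \<Rightarrow> ('e \<Rightarrow> nat) \<Rightarrow> real
    \<Rightarrow> ('e,'o) state \<Rightarrow> 'e \<Rightarrow> real" where
  "top_gain E x rk \<tau> \<omega> e =
     (if \<tau> < x e (snd \<omega> e) \<and> is_top E x rk (snd \<omega>) e then x e (snd \<omega> e) - \<tau> else 0)"

definition isolated_top_gain :: "'e set \<Rightarrow> ('e \<Rightarrow> 'o \<Rightarrow> real) \<Rightarrow> ('e \<Rightarrow> nat) \<Rightarrow> ('e \<Rightarrow> 'o \<Rightarrow> bool)
    \<Rightarrow> real \<Rightarrow> ('e,'o) state \<Rightarrow> 'e \<Rightarrow> real" where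
  "isolated_top_gain E x rk acc \<tau> \<omega> e =
     of_bool (\<forall>e'\<in>E - {e}. \<not> (acc e' (snd \<omega> e') \<and> fst \<omega> e' = fst \<omega> e)) * top_gain E x rk \<tau> \<omega> e"

lemma top_gain_nonneg: "0 \<le> top_gain E x rk \<tau> \<omega> e"
  unfolding top_gain_def by auto

lemma is_top_unique:
  assumes "e \<in> E" "e' \<in> E" "is_top E x rk V e" "is_top E x rk V e'"
  shows "e = e'"
proof (rule ccontr)
  assume "e \<noteq> e'"
  then have "ranks_below x rk e' (V e') e (V e)" "ranks_below x rk e (V e) e' (V e')"
    using assms unfolding is_top_def by auto
  then show False unfolding ranks_below_def by auto
qed

lemma ex_is_top:
  assumes "finite E" "E \<noteq> {}" "inj_on rk E"
  obtains e where "e \<in> E" "is_top E x rk V e" "\<And>e'. e' \<in> E \<Longrightarrow> x e' (V e') \<le> x e (V e)"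
proof -
  obtain e where e: "is_winner x rk E V e" using ex_is_winner[OF assms(1,2)] by blast
  have "e \<in> E" using e unfolding is_winner_def by auto
  moreover have "is_top E x rk V e"
    unfolding is_top_def ranks_below_def
  proof
    fix e' assume e': "e' \<in> E - {e}"
    then have "x e' (V e') < x e (V e) \<or> x e' (V e') = x e (V e) \<and> rk e \<le> rk e'"
      using e unfolding is_winner_def by blast
    moreover have "rk e' \<noteq> rk e" using assms(3) \<open>e \<in> E\<close> e' by (auto dest: inj_onD)
    ultimately show "x e' (V e') < x e (V e) \<or> x e' (V e') = x e (V e) \<and> rk e < rk e'" by auto
  qed
  moreover have "\<And>e'. e' \<in> E \<Longrightarrow> x e' (V e') \<le> x e (V e)"
    using e by (rule is_winner_ge)
  ultimately show ?thesis using that by blast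
qed

lemma opt_le_top_gains:
  assumes "finite E" "inj_on rk E" "0 \<le> \<tau>"
  shows "opt E x \<omega> \<le> \<tau> + (\<Sum>e\<in>E. top_gain E x rk \<tau> \<omega> e)"
proof (cases "E = {}")
  case True
  then show ?thesis unfolding opt_def using assms(3) by simp
next
  case False
  let ?f = "\<lambda>e. x e (snd \<omega> e)"
  obtain e where e: "e \<in> E" "is_top E x rk (snd \<omega>) e" "\<And>e'. e' \<in> E \<Longrightarrow> ?f e' \<le> ?f e"
    using ex_is_top[OF assms(1) False assms(2)] by blast
  have "Max (?f ` E) = ?f e" using assms(1) e by (intro Max_eqI) auto
  then have "opt E x \<omega> = max 0 (?f e)"
    unfolding opt_def using assms(1) False by (subst Max_insert) auto
  also have "\<dots> \<le> \<tau> + top_gain E x rk \<tau> \<omega> e"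
    using e(2) assms(3) unfolding top_gain_def by auto
  also have "top_gain E x rk \<tau> \<omega> e \<le> (\<Sum>e\<in>E. top_gain E x rk \<tau> \<omega> e)"
    using assms(1) e(1) by (intro member_le_sum top_gain_nonneg)
  finally show ?thesis by simp
qed

lemma sum_isolated_top_gains_eq:
  assumes "finite E" "e \<in> E" "is_top E x rk (snd \<omega>) e"
  shows "(\<Sum>e'\<in>E. isolated_top_gain E x rk acc \<tau> \<omega> e') = isolated_top_gain E x rk acc \<tau> \<omega> e"
proof -
  have "isolated_top_gain E x rk acc \<tau> \<omega> e' = 0" if "e' \<in> E - {e}" for e'
  proof -
    have "\<not> is_top E x rk (snd \<omega>) e'" using is_top_unique[OF assms(2) _ assms(3)] that by blast
    then show ?thesis unfolding isolated_top_gain_def top_gain_def by simp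
  qed
  then show ?thesis unfolding sum.remove[OF assms(1,2)] by simp
qed

lemma principal_ge_isolated_top_gains:
  assumes fin: "finite E" and inj: "inj_on rk E" and k: "k > 0"
    and adv: "adversarial E k \<mu> x acc rk s" and \<omega>: "\<omega> \<in> set_pmf (joint_pmf E k \<mu>)"
    and acc_ge: "\<And>e v. acc e v \<Longrightarrow> \<tau> \<le> x e v" and gt_acc: "\<And>e v. \<tau> < x e v \<Longrightarrow> acc e v"
    and x_nonneg: "\<forall>e v. x e v \<ge> 0"
  shows "\<tau> * of_bool (\<exists>e\<in>E. acc e (snd \<omega> e)) + (\<Sum>e\<in>E. isolated_top_gain E x rk acc \<tau> \<omega> e)
           \<le> principal E k x acc rk \<omega> (profile_acts E s \<omega>)"
proof (cases "\<exists>e\<in>E. isolated_top_gain E x rk acc \<tau> \<omega> e \<noteq> 0")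
  case True
  then obtain e where e: "e \<in> E" "isolated_top_gain E x rk acc \<tau> \<omega> e \<noteq> 0" by blast
  then have top: "\<tau> < x e (snd \<omega> e)" "is_top E x rk (snd \<omega>) e"
    and alone: "\<forall>e'\<in>E - {e}. \<not> (acc e' (snd \<omega> e') \<and> fst \<omega> e' = fst \<omega> e)"
    unfolding isolated_top_gain_def top_gain_def by (auto split: if_splits)
  have sum_eq: "(\<Sum>e\<in>E. isolated_top_gain E x rk acc \<tau> \<omega> e) = x e (snd \<omega> e) - \<tau>"
    unfolding sum_isolated_top_gains_eq[OF fin e(1) top(2)]
    using top alone by (simp add: isolated_top_gain_def top_gain_def)
  obtain e' where e': "e' \<in> acc_props E k acc \<omega> (profile_acts E s \<omega>)"
    and "fst \<omega> e' = fst \<omega> e \<or> x e (snd \<omega> e) \<le> x e' (snd \<omega> e')"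
    using adversarial_proposals_cover[OF fin inj k adv \<omega> e(1) gt_acc[OF top(1)]] by blast
  then have "x e (snd \<omega> e) \<le> x e' (snd \<omega> e')"
    using alone unfolding acc_props_def by (cases "e' = e") auto
  then show ?thesis
    using principal_ge_acc_props[OF fin inj e', where x=x] sum_eq e(1) gt_acc[OF top(1)] by auto
next
  case False
  then have sum_eq: "(\<Sum>e\<in>E. isolated_top_gain E x rk acc \<tau> \<omega> e) = 0" by simp
  show ?thesis
  proof (cases "\<exists>e\<in>E. acc e (snd \<omega> e)")
    case True
    then obtain e' where e': "e' \<in> acc_props E k acc \<omega> (profile_acts E s \<omega>)"
      using adversarial_proposals_cover[OF fin inj k adv \<omega>] by blast
    then have "\<tau> \<le> x e' (snd \<omega> e')" using acc_ge unfolding acc_props_def by auto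
    then show ?thesis using principal_ge_acc_props[OF fin inj e', where x=x] sum_eq True by simp
  next
    case False
    then show ?thesis using sum_eq principal_nonneg[OF x_nonneg] by simp
  qed
qed

section \<open>Expectations under the joint distribution\<close>

definition accept_prob :: "('e \<Rightarrow> 'o pmf) \<Rightarrow> ('e \<Rightarrow> 'o \<Rightarrow> bool) \<Rightarrow> 'e \<Rightarrow> real" where
  "accept_prob \<mu> acc e = measure_pmf.expectation (\<mu> e) (\<lambda>w. of_bool (acc e w))"

lemma expectation_of_bool_bounds:
  fixes M :: "'a pmf"
  shows "0 \<le> measure_pmf.expectation M (\<lambda>w. of_bool (P w) :: real)"
    and "measure_pmf.expectation M (\<lambda>w. of_bool (P w) :: real) \<le> 1"
proof -
  show "0 \<le> measure_pmf.expectation M (\<lambda>w. of_bool (P w) :: real)"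
    by (intro Bochner_Integration.integral_nonneg) auto
  have "measure_pmf.expectation M (\<lambda>w. of_bool (P w)) \<le> measure_pmf.expectation M (\<lambda>_. 1 :: real)"
    by (rule integral_mono) (auto intro!: measure_pmf.integrable_const_bound[where B=1])
  then show "measure_pmf.expectation M (\<lambda>w. of_bool (P w) :: real) \<le> 1" by simp
qed

lemma accept_prob_bounds: "0 \<le> accept_prob \<mu> acc e" "accept_prob \<mu> acc e \<le> 1"
  unfolding accept_prob_def by (rule expectation_of_bool_bounds)+

lemma accept_prob_cong:
  assumes "\<And>w. w \<in> set_pmf (\<mu> e) \<Longrightarrow> acc e w \<longleftrightarrow> acc' e w"
  shows "accept_prob \<mu> acc e = accept_prob \<mu> acc' e"
  unfolding accept_prob_def using assms by (intro integral_cong_AE) (auto intro: AE_pmfI)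

lemma accept_prob_mono:
  assumes "finite (set_pmf (\<mu> e))" "\<And>w. acc e w \<Longrightarrow> acc' e w"
  shows "accept_prob \<mu> acc e \<le> accept_prob \<mu> acc' e"
  unfolding accept_prob_def using assms
  by (intro integral_mono integrable_measure_pmf_finite) auto

lemma expectation_of_bool_not:
  assumes "finite (set_pmf M)"
  shows "measure_pmf.expectation M (\<lambda>w. of_bool (\<not> P w)) = 1 - measure_pmf.expectation M (\<lambda>w. of_bool (P w) :: real)"
proof -
  have "measure_pmf.expectation M (\<lambda>w. of_bool (\<not> P w)) = measure_pmf.expectation M (\<lambda>w. 1 - of_bool (P w) :: real)"
    by (intro Bochner_Integration.integral_cong) auto
  also have "\<dots> = 1 - measure_pmf.expectation M (\<lambda>w. of_bool (P w))"
    using assms by (subst Bochner_Integration.integral_diff) (auto intro: integrable_measure_pmf_finite)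
  finally show ?thesis .
qed

lemma prod_of_bool: "finite S \<Longrightarrow> (\<Prod>e\<in>S. of_bool (P e)) = (of_bool (\<forall>e\<in>S. P e) :: real)"
  by (induction S rule: finite_induct) auto

lemma finite_set_Pi_pmf:
  assumes "finite E" "\<And>e. e \<in> E \<Longrightarrow> finite (set_pmf (\<nu> e))"
  shows "finite (set_pmf (Pi_pmf E d \<nu>))"
  unfolding set_Pi_pmf[OF assms(1)] using assms by (intro finite_PiE_dflt) auto

lemma expectation_pair_pmf_iterated:
  fixes F :: "'a \<times> 'b \<Rightarrow> real"
  assumes A: "finite (set_pmf A)" and B: "finite (set_pmf B)"
  shows "measure_pmf.expectation (pair_pmf A B) F =
         measure_pmf.expectation A (\<lambda>a. measure_pmf.expectation B (\<lambda>b. F (a, b)))"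
proof -
  have "measure_pmf.expectation (pair_pmf A B) F =
        (\<Sum>ab\<in>set_pmf A \<times> set_pmf B. F ab * (pmf A (fst ab) * pmf B (snd ab)))"
    using A B by (subst integral_measure_pmf_real[of "set_pmf A \<times> set_pmf B"])
      (auto simp: pmf_pair intro!: sum.cong)
  also have "\<dots> = (\<Sum>a\<in>set_pmf A. \<Sum>b\<in>set_pmf B. F (a, b) * (pmf A a * pmf B b))"
    by (simp add: sum.cartesian_product case_prod_beta)
  also have "\<dots> = (\<Sum>a\<in>set_pmf A. (\<Sum>b\<in>set_pmf B. F (a, b) * pmf B b) * pmf A a)"
    by (simp add: sum_distrib_right sum_distrib_left mult.assoc mult.commute mult.left_commute)
  also have "\<dots> = measure_pmf.expectation A (\<lambda>a. measure_pmf.expectation B (\<lambda>b. F (a, b)))"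
    using A B by (subst (1 2) integral_measure_pmf_real) auto
  finally show ?thesis .
qed

lemma expectation_pair_pmf_mult:
  fixes f :: "'a \<Rightarrow> real" and g :: "'b \<Rightarrow> real"
  assumes "finite (set_pmf A)" "finite (set_pmf B)"
  shows "measure_pmf.expectation (pair_pmf A B) (\<lambda>y. f (fst y) * g (snd y)) =
         measure_pmf.expectation A f * measure_pmf.expectation B g"
  by (simp add: expectation_pair_pmf_iterated[OF assms])

lemma expectation_Pi_pmf_condition:
  fixes D :: "'a \<Rightarrow> real" and G :: "'e \<Rightarrow> 'a \<Rightarrow> 'a \<Rightarrow> real"
  assumes fin: "finite E" and e: "e \<in> E"
    and fin_\<nu>: "\<And>e. e \<in> E \<Longrightarrow> finite (set_pmf (\<nu> e))" and G_nonneg: "\<And>e' y w. 0 \<le> G e' y w"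
  shows "measure_pmf.expectation (Pi_pmf E d \<nu>) (\<lambda>z. D (z e) * (\<Prod>e'\<in>E - {e}. G e' (z e) (z e'))) =
         measure_pmf.expectation (\<nu> e)
           (\<lambda>y. D y * (\<Prod>e'\<in>E - {e}. measure_pmf.expectation (\<nu> e') (G e' y)))"
proof -
  let ?R = "E - {e}"
  have fin_R: "finite (set_pmf (Pi_pmf ?R d \<nu>))" using fin fin_\<nu> by (intro finite_set_Pi_pmf) auto
  have reindex: "(\<Prod>e'\<in>?R. G e' y (if e' = e then y else f e')) = (\<Prod>e'\<in>?R. G e' y (f e'))" for y f
    by (intro prod.cong) auto
  have "Pi_pmf E d \<nu> = Pi_pmf (insert e ?R) d \<nu>" using e by (simp add: insert_absorb)
  also have "\<dots> = map_pmf (\<lambda>(y, f). f(e := y)) (pair_pmf (\<nu> e) (Pi_pmf ?R d \<nu>))"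
    using fin by (intro Pi_pmf_insert) auto
  finally have "measure_pmf.expectation (Pi_pmf E d \<nu>) (\<lambda>z. D (z e) * (\<Prod>e'\<in>?R. G e' (z e) (z e'))) =
      measure_pmf.expectation (pair_pmf (\<nu> e) (Pi_pmf ?R d \<nu>))
        (\<lambda>yf. D (fst yf) * (\<Prod>e'\<in>?R. G e' (fst yf) (snd yf e')))"
    by (simp add: case_prod_beta reindex)
  also have "\<dots> = measure_pmf.expectation (\<nu> e)
      (\<lambda>y. D y * measure_pmf.expectation (Pi_pmf ?R d \<nu>) (\<lambda>f. \<Prod>e'\<in>?R. G e' y (f e')))"
    using fin_\<nu>[OF e] fin_R by (simp add: expectation_pair_pmf_iterated)
  also have "\<dots> = measure_pmf.expectation (\<nu> e)
      (\<lambda>y. D y * (\<Prod>e'\<in>?R. measure_pmf.expectation (\<nu> e') (G e' y)))"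
    using fin fin_\<nu> G_nonneg
    by (subst expectation_prod_Pi_pmf) (auto intro: integrable_measure_pmf_finite)
  finally show ?thesis .
qed

definition unzip_state :: "('e \<Rightarrow> nat \<times> 'o) \<Rightarrow> ('e,'o) state" where
  "unzip_state z = (fst \<circ> z, snd \<circ> z)"

lemma unzip_state_simps [simp]: "fst (unzip_state z) = fst \<circ> z" "snd (unzip_state z) = snd \<circ> z"
  unfolding unzip_state_def by simp_all

lemma joint_pmf_eq_map_unzip_state:
  fixes E :: "'e set" and \<mu> :: "'e \<Rightarrow> 'o pmf"
  assumes fin: "finite E"
  shows "joint_pmf E k \<mu> =
    map_pmf unzip_state (Pi_pmf E (0, undefined) (\<lambda>e. pair_pmf (pmf_of_set {..<k}) (\<mu> e)))"
proof (rule pmf_eqI)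
  fix \<omega> :: "('e,'o) state"
  obtain \<sigma> V where \<omega>: "\<omega> = (\<sigma>, V)" by (cases \<omega>)
  let ?Z = "Pi_pmf E (0, undefined) (\<lambda>e. pair_pmf (pmf_of_set {..<k}) (\<mu> e))"
  have inj: "inj unzip_state"
    unfolding unzip_state_def by (rule injI) (auto simp: fun_eq_iff prod_eq_iff)
  have "(\<sigma>, V) = unzip_state (\<lambda>e. (\<sigma> e, V e))" by (simp add: unzip_state_def o_def)
  then have "pmf (map_pmf unzip_state ?Z) (\<sigma>, V) = pmf ?Z (\<lambda>e. (\<sigma> e, V e))"
    by (simp only: pmf_map_inj'[OF inj])
  also have "\<dots> = (if \<forall>e. e \<notin> E \<longrightarrow> (\<sigma> e, V e) = (0, undefined)
       then \<Prod>e\<in>E. pmf (pair_pmf (pmf_of_set {..<k}) (\<mu> e)) (\<sigma> e, V e) else 0)"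
    by (rule pmf_Pi[OF fin])
  also have "\<dots> = pmf (joint_pmf E k \<mu>) (\<sigma>, V)"
    unfolding joint_pmf_def pmf_pair pmf_Pi[OF fin] by (auto simp: prod.distrib)
  finally show "pmf (joint_pmf E k \<mu>) \<omega> = pmf (map_pmf unzip_state ?Z) \<omega>" unfolding \<omega> by simp
qed

lemma finite_set_joint_pmf:
  assumes "finite E" "k > 0" "\<forall>e\<in>E. finite (set_pmf (\<mu> e))"
  shows "finite (set_pmf (joint_pmf E k \<mu>))"
  unfolding joint_pmf_eq_map_unzip_state[OF assms(1)] set_map_pmf
  using assms by (intro finite_imageI finite_set_Pi_pmf) auto

lemma expectation_some_acceptable:
  assumes fin: "finite E" and fin_\<mu>: "\<forall>e\<in>E. finite (set_pmf (\<mu> e))"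
  shows "measure_pmf.expectation (joint_pmf E k \<mu>) (\<lambda>\<omega>. of_bool (\<exists>e\<in>E. acc e (snd \<omega> e)))
         = 1 - (\<Prod>e\<in>E. 1 - accept_prob \<mu> acc e)"
proof -
  let ?P = "Pi_pmf E undefined \<mu>"
  have fin_P: "finite (set_pmf ?P)" using fin fin_\<mu> by (intro finite_set_Pi_pmf) auto
  have "measure_pmf.expectation (joint_pmf E k \<mu>) (\<lambda>\<omega>. of_bool (\<exists>e\<in>E. acc e (snd \<omega> e)))
        = measure_pmf.expectation ?P (\<lambda>V. of_bool (\<exists>e\<in>E. acc e (V e)) :: real)"
    unfolding joint_pmf_def
    by (rule expectation_pair_pmf_snd[where f="\<lambda>V. of_bool (\<exists>e\<in>E. acc e (V e)) :: real"])
  also have "\<dots> = measure_pmf.expectation ?P (\<lambda>V. 1 - (\<Prod>e\<in>E. of_bool (\<not> acc e (V e))))"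
    by (intro Bochner_Integration.integral_cong) (simp_all add: prod_of_bool[OF fin])
  also have "\<dots> = 1 - (\<Prod>e\<in>E. measure_pmf.expectation (\<mu> e) (\<lambda>w. of_bool (\<not> acc e w)))"
    using fin_P fin_\<mu> expectation_prod_Pi_pmf[OF fin, where f="\<lambda>e w. of_bool (\<not> acc e w)" and p=\<mu>]
    by (simp add: Bochner_Integration.integral_diff integrable_measure_pmf_finite)
  also have "\<dots> = 1 - (\<Prod>e\<in>E. 1 - accept_prob \<mu> acc e)"
    using fin_\<mu> by (simp add: accept_prob_def expectation_of_bool_not)
  finally show ?thesis .
qed

(* B is "ranks below e" and A "acceptable"; a uniformly random agent equals the agent i of e with
   probability 1 / k, and A \<and> B has probability at least q - (1 - P(B)). *)
lemma expectation_uniform_avoid_ge: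
  fixes B A :: "'o \<Rightarrow> bool" and M :: "'o pmf"
  assumes i: "i < k" and fin_M: "finite (set_pmf M)" and BA: "\<And>w. \<not> B w \<Longrightarrow> A w"
  shows "(1 - measure_pmf.expectation M (\<lambda>w. of_bool (A w)) / real k) *
           measure_pmf.expectation (pair_pmf (pmf_of_set {..<k}) M) (\<lambda>y. of_bool (B (snd y)))
         \<le> measure_pmf.expectation (pair_pmf (pmf_of_set {..<k}) M)
              (\<lambda>y. of_bool (B (snd y) \<and> \<not> (A (snd y) \<and> fst y = i)))"
proof -
  let ?U = "pmf_of_set {..<k} :: nat pmf"
  let ?P = "pair_pmf ?U M"
  have fin_U: "finite (set_pmf ?U)" using i by simp
  have int: "integrable (measure_pmf N) f" if "finite (set_pmf N)" for N :: "'a pmf" and f :: "'a \<Rightarrow> real"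
    using that by (rule integrable_measure_pmf_finite)
  define q :: real where "q = measure_pmf.expectation M (\<lambda>w. of_bool (A w))"
  define \<beta> :: real where "\<beta> = measure_pmf.expectation M (\<lambda>w. of_bool (B w))"
  have q: "q \<le> 1" and \<beta>: "\<beta> \<le> 1" unfolding q_def \<beta>_def by (rule expectation_of_bool_bounds)+
  have "measure_pmf.expectation M (\<lambda>w. of_bool (A w \<and> B w)) =
        (measure_pmf.expectation M (\<lambda>w. of_bool (A w) - (1 - of_bool (B w))) :: real)"
    using BA by (intro Bochner_Integration.integral_cong) auto
  also have "\<dots> = q - (1 - \<beta>)"
    unfolding q_def \<beta>_def using fin_M int
    by (subst Bochner_Integration.integral_diff; (subst Bochner_Integration.integral_diff)?) auto
  finally have AB: "measure_pmf.expectation M (\<lambda>w. of_bool (A w \<and> B w)) = q - (1 - \<beta>)" .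
  have pair_B: "measure_pmf.expectation ?P (\<lambda>y. of_bool (B (snd y))) = \<beta>"
    unfolding \<beta>_def by (rule expectation_pair_pmf_snd[where f="\<lambda>w. of_bool (B w) :: real"])
  have uniform: "measure_pmf.expectation ?U (\<lambda>s. of_bool (s = i)) = 1 / real k"
    using i by (subst integral_pmf_of_set) auto
  have "measure_pmf.expectation ?P (\<lambda>y. of_bool (B (snd y) \<and> \<not> (A (snd y) \<and> fst y = i))) =
        measure_pmf.expectation ?P
          (\<lambda>y. of_bool (B (snd y)) - of_bool (fst y = i) * of_bool (A (snd y) \<and> B (snd y)) :: real)"
    by (intro Bochner_Integration.integral_cong) auto
  also have "\<dots> = \<beta> - (q - (1 - \<beta>)) / real k"
    using int[of ?P] fin_U fin_M AB uniform pair_B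
      expectation_pair_pmf_mult[OF fin_U fin_M, of "\<lambda>s. of_bool (s = i)" "\<lambda>w. of_bool (A w \<and> B w)"]
    by (simp add: Bochner_Integration.integral_diff)
  finally have avoid: "measure_pmf.expectation ?P (\<lambda>y. of_bool (B (snd y) \<and> \<not> (A (snd y) \<and> fst y = i)))
      = \<beta> - (q - (1 - \<beta>)) / real k" .
  have "\<beta> - (q - (1 - \<beta>)) / real k - (1 - q / real k) * \<beta> = (1 - q) * (1 - \<beta>) / real k"
    using i by (simp add: field_simps)
  also have "\<dots> \<ge> 0" using q \<beta> by (intro divide_nonneg_nonneg mult_nonneg_nonneg) auto
  finally show ?thesis unfolding avoid pair_B q_def[symmetric] by simp
qed

lemma prod_uniform_avoid_ge:
  fixes acc :: "'e \<Rightarrow> 'o \<Rightarrow> bool"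
  assumes fin: "finite E" and e: "e \<in> E" and fin_\<mu>: "\<forall>e\<in>E. finite (set_pmf (\<mu> e))"
    and gt_acc: "\<And>e v. \<tau> < x e v \<Longrightarrow> acc e v"
    and y: "fst y < k" "\<tau> < x e (snd y)"
  shows "(\<Prod>e'\<in>E. 1 - accept_prob \<mu> acc e' / real k) *
           (\<Prod>e'\<in>E - {e}. measure_pmf.expectation (pair_pmf (pmf_of_set {..<k}) (\<mu> e'))
              (\<lambda>w. of_bool (ranks_below x rk e' (snd w) e (snd y))))
         \<le> (\<Prod>e'\<in>E - {e}. measure_pmf.expectation (pair_pmf (pmf_of_set {..<k}) (\<mu> e'))
              (\<lambda>w. of_bool (ranks_below x rk e' (snd w) e (snd y)
                             \<and> \<not> (acc e' (snd w) \<and> fst w = fst y))))"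
    (is "?c * (\<Prod>e'\<in>E - {e}. ?below e') \<le> (\<Prod>e'\<in>E - {e}. ?alone e')")
proof -
  let ?f = "\<lambda>e'. 1 - accept_prob \<mu> acc e' / real k"
  have f: "0 \<le> ?f e'" "?f e' \<le> 1" for e'
  proof -
    have "accept_prob \<mu> acc e' \<le> real k" using accept_prob_bounds(2)[of \<mu> acc e'] y(1) by linarith
    then show "0 \<le> ?f e'" using y(1) by simp
    show "?f e' \<le> 1" using accept_prob_bounds(1)[of \<mu> acc e'] by simp
  qed
  have below_nonneg: "0 \<le> ?below e'" for e' by (rule expectation_of_bool_bounds(1))
  have "?c = ?f e * (\<Prod>e'\<in>E - {e}. ?f e')" by (rule prod.remove[OF fin e])
  also have "\<dots> \<le> (\<Prod>e'\<in>E - {e}. ?f e')" using f by (intro mult_left_le_one_le prod_nonneg)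
  finally have "?c * (\<Prod>e'\<in>E - {e}. ?below e') \<le> (\<Prod>e'\<in>E - {e}. ?f e') * (\<Prod>e'\<in>E - {e}. ?below e')"
    using below_nonneg by (intro mult_right_mono prod_nonneg)
  also have "\<dots> = (\<Prod>e'\<in>E - {e}. ?f e' * ?below e')" by (rule prod.distrib[symmetric])
  also have "\<dots> \<le> (\<Prod>e'\<in>E - {e}. ?alone e')"
  proof (rule prod_mono)
    fix e' assume "e' \<in> E - {e}"
    then have "finite (set_pmf (\<mu> e'))" using fin_\<mu> by auto
    moreover have "acc e' w" if "\<not> ranks_below x rk e' w e (snd y)" for w
    proof -
      have "\<tau> < x e' w" using that y(2) unfolding ranks_below_def by linarith
      then show ?thesis by (rule gt_acc)
    qed
    ultimately have "?f e' * ?below e' \<le> ?alone e'"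
      unfolding accept_prob_def using y(1) by (intro expectation_uniform_avoid_ge) auto
    then show "0 \<le> ?f e' * ?below e' \<and> ?f e' * ?below e' \<le> ?alone e'"
      using f below_nonneg by simp
  qed
  finally show ?thesis .
qed

lemma expectation_joint_pmf_condition:
  fixes F :: "('e,'o) state \<Rightarrow> real" and D :: "nat \<times> 'o \<Rightarrow> real"
    and G :: "'e \<Rightarrow> nat \<times> 'o \<Rightarrow> nat \<times> 'o \<Rightarrow> real"
  assumes fin: "finite E" and e: "e \<in> E" and k: "k > 0" and fin_\<mu>: "\<forall>e\<in>E. finite (set_pmf (\<mu> e))"
    and G_nonneg: "\<And>e' y w. 0 \<le> G e' y w"
    and F: "\<And>z. F (unzip_state z) = D (z e) * (\<Prod>e'\<in>E - {e}. G e' (z e) (z e'))"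
  shows "measure_pmf.expectation (joint_pmf E k \<mu>) F =
    measure_pmf.expectation (pair_pmf (pmf_of_set {..<k}) (\<mu> e)) (\<lambda>y. D y *
      (\<Prod>e'\<in>E - {e}. measure_pmf.expectation (pair_pmf (pmf_of_set {..<k}) (\<mu> e')) (G e' y)))"
  unfolding joint_pmf_eq_map_unzip_state[OF fin] integral_map_pmf F
  by (rule expectation_Pi_pmf_condition[OF fin e _ G_nonneg]) (use fin_\<mu> k in auto)

lemma expectation_isolated_top_gain_ge:
  fixes acc :: "'e \<Rightarrow> 'o \<Rightarrow> bool"
  assumes fin: "finite E" and e: "e \<in> E" and k: "k > 0"
    and fin_\<mu>: "\<forall>e\<in>E. finite (set_pmf (\<mu> e))"
    and gt_acc: "\<And>e v. \<tau> < x e v \<Longrightarrow> acc e v"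
  shows "(\<Prod>e'\<in>E. 1 - accept_prob \<mu> acc e' / real k) *
           measure_pmf.expectation (joint_pmf E k \<mu>) (\<lambda>\<omega>. top_gain E x rk \<tau> \<omega> e)
         \<le> measure_pmf.expectation (joint_pmf E k \<mu>) (\<lambda>\<omega>. isolated_top_gain E x rk acc \<tau> \<omega> e)"
proof -
  let ?\<nu> = "\<lambda>e. pair_pmf (pmf_of_set {..<k}) (\<mu> e)"
  let ?c = "\<Prod>e'\<in>E. 1 - accept_prob \<mu> acc e' / real k"
  define D where "D y = (if \<tau> < x e (snd y) then x e (snd y) - \<tau> else 0)" for y :: "nat \<times> 'o"
  define G :: "'e \<Rightarrow> nat \<times> 'o \<Rightarrow> nat \<times> 'o \<Rightarrow> real"
    where "G = (\<lambda>e' y w. of_bool (ranks_below x rk e' (snd w) e (snd y)))"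
  define G_iso :: "'e \<Rightarrow> nat \<times> 'o \<Rightarrow> nat \<times> 'o \<Rightarrow> real"
    where "G_iso = (\<lambda>e' y w. G e' y w * of_bool (\<not> (acc e' (snd w) \<and> fst w = fst y)))"
  have top_gain_eq: "top_gain E x rk \<tau> (unzip_state z) e = D (z e) * (\<Prod>e'\<in>E - {e}. G e' (z e) (z e'))" for z
    using fin by (simp add: top_gain_def is_top_def D_def G_def prod_of_bool)
  have top_gain: "measure_pmf.expectation (joint_pmf E k \<mu>) (\<lambda>\<omega>. top_gain E x rk \<tau> \<omega> e) =
      measure_pmf.expectation (?\<nu> e) (\<lambda>y. D y * (\<Prod>e'\<in>E - {e}. measure_pmf.expectation (?\<nu> e') (G e' y)))"
    using top_gain_eq by (intro expectation_joint_pmf_condition[OF fin e k fin_\<mu>]) (simp_all add: G_def)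
  have isolated: "measure_pmf.expectation (joint_pmf E k \<mu>) (\<lambda>\<omega>. isolated_top_gain E x rk acc \<tau> \<omega> e) =
      measure_pmf.expectation (?\<nu> e) (\<lambda>y. D y * (\<Prod>e'\<in>E - {e}. measure_pmf.expectation (?\<nu> e') (G_iso e' y)))"
    using fin by (intro expectation_joint_pmf_condition[OF fin e k fin_\<mu>])
      (simp_all add: isolated_top_gain_def top_gain_eq G_iso_def G_def prod.distrib prod_of_bool)
  have pointwise: "?c * (D y * (\<Prod>e'\<in>E - {e}. measure_pmf.expectation (?\<nu> e') (G e' y)))
      \<le> D y * (\<Prod>e'\<in>E - {e}. measure_pmf.expectation (?\<nu> e') (G_iso e' y))"
    if "y \<in> set_pmf (?\<nu> e)" for y
  proof (cases "\<tau> < x e (snd y)")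
    case True
    have y: "fst y < k" using that k by auto
    have "?c * (\<Prod>e'\<in>E - {e}. measure_pmf.expectation (?\<nu> e') (G e' y))
        \<le> (\<Prod>e'\<in>E - {e}. measure_pmf.expectation (?\<nu> e') (G_iso e' y))"
      unfolding G_iso_def G_def of_bool_conj[symmetric]
      using prod_uniform_avoid_ge[where x=x and \<tau>=\<tau> and acc=acc and rk=rk, OF fin e fin_\<mu> gt_acc y True]
      by simp
    then have "D y * (?c * (\<Prod>e'\<in>E - {e}. measure_pmf.expectation (?\<nu> e') (G e' y)))
        \<le> D y * (\<Prod>e'\<in>E - {e}. measure_pmf.expectation (?\<nu> e') (G_iso e' y))"
      by (rule mult_left_mono) (simp add: D_def)
    then show ?thesis by (simp only: mult.left_commute)
  qed (simp add: D_def)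
  have "finite (set_pmf (?\<nu> e))" using fin_\<mu> e k by simp
  then have "measure_pmf.expectation (?\<nu> e)
        (\<lambda>y. ?c * (D y * (\<Prod>e'\<in>E - {e}. measure_pmf.expectation (?\<nu> e') (G e' y))))
      \<le> measure_pmf.expectation (?\<nu> e)
        (\<lambda>y. D y * (\<Prod>e'\<in>E - {e}. measure_pmf.expectation (?\<nu> e') (G_iso e' y)))"
    using pointwise by (intro integral_mono_AE integrable_measure_pmf_finite AE_pmfI)
  then show ?thesis unfolding top_gain isolated by simp
qed

section \<open>Choice of the threshold\<close>

lemma ex_threshold_straddling:
  fixes x :: "'e \<Rightarrow> 'o \<Rightarrow> real"
  assumes fin: "finite E" and ne: "E \<noteq> {}" and fin_\<mu>: "\<forall>e\<in>E. finite (set_pmf (\<mu> e))"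
    and x_nonneg: "\<forall>e v. x e v \<ge> 0" and c: "0 \<le> c" "c \<le> 1"
  shows "\<exists>\<tau>\<ge>0. (\<Prod>e\<in>E. 1 - accept_prob \<mu> (\<lambda>e w. \<tau> \<le> x e w) e) \<le> c \<and>
               c \<le> (\<Prod>e\<in>E. 1 - accept_prob \<mu> (\<lambda>e w. \<tau> < x e w) e)"
proof -
  define F where "F t = (\<Prod>e\<in>E. 1 - accept_prob \<mu> (\<lambda>e w. t \<le> x e w) e)" for t
  define vals where "vals = insert 0 (\<Union>e\<in>E. x e ` set_pmf (\<mu> e))"
  have fin_vals: "finite vals" unfolding vals_def using fin fin_\<mu> by auto
  have vals: "x e w \<in> vals" if "e \<in> E" "w \<in> set_pmf (\<mu> e)" for e w
    unfolding vals_def using that by blast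
  define T where "T = {t \<in> vals. F t \<le> c}"
  have fin_T: "finite T" unfolding T_def using fin_vals by simp
  obtain e where "e \<in> E" using ne by blast
  moreover have "accept_prob \<mu> (\<lambda>e w. 0 \<le> x e w) e = 1" unfolding accept_prob_def using x_nonneg by simp
  ultimately have "F 0 = 0" unfolding F_def using fin by (intro prod_zero) force+
  then have "0 \<in> T" unfolding T_def vals_def using c by simp
  define \<tau> where "\<tau> = Max T"
  have "\<tau> \<in> T" "0 \<le> \<tau>" unfolding \<tau>_def using fin_T \<open>0 \<in> T\<close> by (auto intro: Max_in Max_ge)
  then have weak: "F \<tau> \<le> c" unfolding T_def by simp
  have "c \<le> (\<Prod>e\<in>E. 1 - accept_prob \<mu> (\<lambda>e w. \<tau> < x e w) e)"
  proof (cases "\<exists>v\<in>vals. \<tau> < v")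
    case True
    define t where "t = Min {v \<in> vals. \<tau> < v}"
    have "t \<in> {v \<in> vals. \<tau> < v}" unfolding t_def using fin_vals True by (intro Min_in) auto
    then have t: "t \<in> vals" "\<tau> < t" by auto
    have next_val: "t \<le> v" if "v \<in> vals" "\<tau> < v" for v
      unfolding t_def using fin_vals that by (intro Min_le) auto
    have "t \<notin> T"
    proof
      assume "t \<in> T"
      with fin_T have "t \<le> \<tau>" unfolding \<tau>_def by (rule Max_ge)
      with t(2) show False by simp
    qed
    then have "c < F t" using t(1) unfolding T_def by auto
    also have "F t = (\<Prod>e\<in>E. 1 - accept_prob \<mu> (\<lambda>e w. \<tau> < x e w) e)"
      unfolding F_def using vals next_val t(2)
      by (intro prod.cong refl arg_cong[where f="(-) 1"] accept_prob_cong) force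
    finally show ?thesis by simp
  next
    case False
    then have "accept_prob \<mu> (\<lambda>e w. \<tau> < x e w) e = accept_prob \<mu> (\<lambda>_ _. False) e" if "e \<in> E" for e
      using vals[OF that] by (intro accept_prob_cong) auto
    then show ?thesis using c by (simp add: accept_prob_def)
  qed
  then show ?thesis using \<open>0 \<le> \<tau>\<close> weak unfolding F_def by blast
qed

lemma affine_le_endpoint:
  fixes A B t a b :: real
  assumes "b \<le> t" "t \<le> a"
  shows "A + B * t \<le> A + B * a \<or> A + B * t \<le> A + B * b"
proof (cases "B \<ge> 0")
  case True
  then have "B * t \<le> B * a" using assms by (intro mult_left_mono) auto
  then show ?thesis by simp
next
  case False
  then have "B * t \<le> B * b" using assms by (intro mult_left_mono_neg) auto
  then show ?thesis by simp
qed

(* The function is affine in each q e separately, so moving the coordinates one at a time to an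
   endpoint of [b e, a e] never decreases it. *)
lemma ex_vertex_ge:
  fixes a b q :: "'e \<Rightarrow> real" and K :: real
  assumes "finite S" "\<forall>e\<in>S. b e \<le> q e \<and> q e \<le> a e"
  shows "\<exists>W\<subseteq>S. \<alpha> + \<beta> * (\<Prod>e\<in>S. 1 - q e) + \<gamma> * (\<Prod>e\<in>S. 1 - q e / K) \<le>
     \<alpha> + \<beta> * (\<Prod>e\<in>S. 1 - (if e \<in> W then a e else b e))
        + \<gamma> * (\<Prod>e\<in>S. 1 - (if e \<in> W then a e else b e) / K)"
  using assms
proof (induction S arbitrary: \<beta> \<gamma> rule: finite_induct)
  case empty
  then show ?case by auto
next
  case (insert e S)
  let ?Q = "\<Prod>e\<in>S. 1 - q e"
  let ?P = "\<Prod>e\<in>S. 1 - q e / K"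
  let ?v = "\<lambda>W e. if e \<in> W then a e else b e"
  define f where "f t = \<alpha> + \<beta> * (1 - t) * ?Q + \<gamma> * (1 - t / K) * ?P" for t
  have f_affine: "f t = (\<alpha> + \<beta> * ?Q + \<gamma> * ?P) + (- \<beta> * ?Q - \<gamma> * ?P / K) * t" for t
    unfolding f_def by (simp add: algebra_simps diff_divide_distrib)
  have "b e \<le> q e" "q e \<le> a e" using insert.prems by auto
  then have "f (q e) \<le> f (a e) \<or> f (q e) \<le> f (b e)"
    unfolding f_affine by (rule affine_le_endpoint)
  then obtain c where c: "c = a e \<or> c = b e" and fc: "f (q e) \<le> f c" by blast
  obtain W where W: "W \<subseteq> S" and IH:
    "\<alpha> + (\<beta> * (1 - c)) * ?Q + (\<gamma> * (1 - c / K)) * ?P \<le>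
     \<alpha> + (\<beta> * (1 - c)) * (\<Prod>e\<in>S. 1 - ?v W e) + (\<gamma> * (1 - c / K)) * (\<Prod>e\<in>S. 1 - ?v W e / K)"
    using insert.IH[of "\<beta> * (1 - c)" "\<gamma> * (1 - c / K)"] insert.prems by auto
  define W' where "W' = (if c = a e then insert e W else W)"
  have "W' \<subseteq> insert e S" unfolding W'_def using W by auto
  have ce: "?v W' e = c" unfolding W'_def using c W insert.hyps(2) by auto
  have same: "?v W' e' = ?v W e'" if "e' \<in> S" for e'
    unfolding W'_def using that insert.hyps(2) by auto
  have "\<alpha> + \<beta> * (\<Prod>e\<in>insert e S. 1 - q e) + \<gamma> * (\<Prod>e\<in>insert e S. 1 - q e / K) = f (q e)"
    unfolding f_def using insert.hyps by (simp add: algebra_simps)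
  also have "\<dots> \<le> f c" by (rule fc)
  also have "f c = \<alpha> + (\<beta> * (1 - c)) * ?Q + (\<gamma> * (1 - c / K)) * ?P"
    unfolding f_def by (simp add: algebra_simps)
  also note IH
  also have "\<alpha> + (\<beta> * (1 - c)) * (\<Prod>e\<in>S. 1 - ?v W e) + (\<gamma> * (1 - c / K)) * (\<Prod>e\<in>S. 1 - ?v W e / K) =
     \<alpha> + \<beta> * (\<Prod>e'\<in>insert e S. 1 - ?v W' e') + \<gamma> * (\<Prod>e'\<in>insert e S. 1 - ?v W' e' / K)"
    using insert.hyps ce same by (simp add: algebra_simps)
  finally show ?case using \<open>W' \<subseteq> insert e S\<close> by blast
qed

lemma le_prod_one_minus_div_if_power_le:
  fixes q :: "'e \<Rightarrow> real" and k :: nat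
  assumes "finite S" "k > 0" "\<forall>e\<in>S. 0 \<le> q e \<and> q e \<le> 1" "r ^ k \<le> (\<Prod>e\<in>S. 1 - q e)"
  shows "r \<le> (\<Prod>e\<in>S. 1 - q e / real k)"
proof -
  have "1 \<le> real k" using assms(2) by simp
  then have q: "0 \<le> q e / real k" "q e / real k \<le> 1" if "e \<in> S" for e
    using assms(3) that by auto
  note assms(4)
  also have "(\<Prod>e\<in>S. 1 - q e) \<le> (\<Prod>e\<in>S. (1 - q e / real k) ^ k)"
  proof (rule prod_mono)
    fix e assume "e \<in> S"
    then have "-1 \<le> - q e / real k" using q by simp
    then have "1 + real k * (- q e / real k) \<le> (1 + (- q e / real k)) ^ k"
      by (rule Bernoulli_inequality)
    then show "0 \<le> 1 - q e \<and> 1 - q e \<le> (1 - q e / real k) ^ k"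
      using assms(2,3) \<open>e \<in> S\<close> by simp
  qed
  also have "\<dots> = (\<Prod>e\<in>S. 1 - q e / real k) ^ Suc (k - 1)"
    using assms(2) by (simp add: prod_power_distrib)
  finally have "r ^ Suc (k - 1) \<le> (\<Prod>e\<in>S. 1 - q e / real k) ^ Suc (k - 1)" using assms(2) by simp
  then show ?thesis by (rule power_le_imp_le_base) (use q in \<open>auto intro: prod_nonneg\<close>)
qed

(* On the segment from b to a the intermediate value theorem gives a point q with
   prod (1 - q e) = 1 - p = p ^ k, where prod (1 - q e / k) >= p. *)
lemma ex_tie_set:
  fixes a b :: "'e \<Rightarrow> real" and k :: nat and p \<tau> M :: real
  assumes fin: "finite S" and k: "k > 0" and p: "p ^ k + p - 1 = 0"
    and \<tau>: "\<tau> \<ge> 0" and M: "M \<ge> 0"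
    and ab: "\<forall>e\<in>S. 0 \<le> b e \<and> b e \<le> a e \<and> a e \<le> 1"
    and a: "(\<Prod>e\<in>S. 1 - a e) \<le> 1 - p" and b: "1 - p \<le> (\<Prod>e\<in>S. 1 - b e)"
  shows "\<exists>W\<subseteq>S. p * (\<tau> + M) \<le> \<tau> * (1 - (\<Prod>e\<in>S. 1 - (if e \<in> W then a e else b e)))
            + (\<Prod>e\<in>S. 1 - (if e \<in> W then a e else b e) / real k) * M"
proof -
  define h where "h l = (\<Prod>e\<in>S. 1 - (b e + l * (a e - b e)))" for l :: real
  have "\<forall>l. 0 \<le> l \<and> l \<le> 1 \<longrightarrow> isCont h l"
    unfolding h_def by (intro allI impI continuous_intros)
  then obtain l where l: "0 \<le> l" "l \<le> 1" "h l = 1 - p"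
    using IVT2[of h 1 "1 - p" 0] a b unfolding h_def by auto
  define q where "q e = b e + l * (a e - b e)" for e
  have q: "b e \<le> q e \<and> q e \<le> a e" if "e \<in> S" for e
  proof -
    have "0 \<le> a e - b e" using ab that by auto
    then have "0 \<le> l * (a e - b e)" "l * (a e - b e) \<le> 1 * (a e - b e)"
      using l(1) mult_right_mono[OF l(2)] by simp_all
    then show ?thesis unfolding q_def by simp
  qed
  have Q: "(\<Prod>e\<in>S. 1 - q e) = 1 - p" using l(3) unfolding h_def q_def by simp
  obtain W where W: "W \<subseteq> S" and vertex:
    "\<tau> + (- \<tau>) * (\<Prod>e\<in>S. 1 - q e) + M * (\<Prod>e\<in>S. 1 - q e / real k) \<le>
     \<tau> + (- \<tau>) * (\<Prod>e\<in>S. 1 - (if e \<in> W then a e else b e))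
       + M * (\<Prod>e\<in>S. 1 - (if e \<in> W then a e else b e) / real k)"
    using ex_vertex_ge[OF fin, of b q a \<tau> "- \<tau>" M "real k"] q by blast
  have q01: "\<forall>e\<in>S. 0 \<le> q e \<and> q e \<le> 1"
  proof
    fix e assume "e \<in> S"
    then show "0 \<le> q e \<and> q e \<le> 1" using q[of e] ab by auto
  qed
  have "p ^ k \<le> (\<Prod>e\<in>S. 1 - q e)" using Q p by simp
  then have "p \<le> (\<Prod>e\<in>S. 1 - q e / real k)" by (rule le_prod_one_minus_div_if_power_le[OF fin k q01])
  then have "p * M \<le> (\<Prod>e\<in>S. 1 - q e / real k) * M" using M by (rule mult_right_mono)
  then have "p * (\<tau> + M) \<le> \<tau> + (- \<tau>) * (\<Prod>e\<in>S. 1 - q e) + M * (\<Prod>e\<in>S. 1 - q e / real k)"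
    unfolding Q by (simp add: algebra_simps)
  also note vertex
  finally show ?thesis using W by (intro exI[of _ W]) (simp add: algebra_simps)
qed

lemma ex_threshold_params:
  fixes x :: "'e \<Rightarrow> 'o \<Rightarrow> real" and M :: "real \<Rightarrow> real"
  assumes fin: "finite E" and ne: "E \<noteq> {}" and fin_\<mu>: "\<forall>e\<in>E. finite (set_pmf (\<mu> e))"
    and x_nonneg: "\<forall>e v. x e v \<ge> 0" and k: "k > 0" and p: "p > 0" "p ^ k + p - 1 = 0"
    and M: "\<And>\<tau>. 0 \<le> M \<tau>"
  obtains \<tau> strict where "0 \<le> \<tau>"
    "p * (\<tau> + M \<tau>) \<le> \<tau> * (1 - (\<Prod>e\<in>E. 1 - accept_prob \<mu> (threshold_acc x (\<lambda>_. \<tau>) strict) e))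
       + (\<Prod>e\<in>E. 1 - accept_prob \<mu> (threshold_acc x (\<lambda>_. \<tau>) strict) e / real k) * M \<tau>"
proof -
  have "p < 1" using p zero_less_power[OF p(1), of k] by linarith
  then obtain \<tau> where \<tau>: "0 \<le> \<tau>"
    and weak: "(\<Prod>e\<in>E. 1 - accept_prob \<mu> (\<lambda>e w. \<tau> \<le> x e w) e) \<le> 1 - p"
    and strict: "1 - p \<le> (\<Prod>e\<in>E. 1 - accept_prob \<mu> (\<lambda>e w. \<tau> < x e w) e)"
    using ex_threshold_straddling[OF fin ne fin_\<mu> x_nonneg, of "1 - p"] p by auto
  define a where "a e = accept_prob \<mu> (\<lambda>e w. \<tau> \<le> x e w) e" for e
  define b where "b e = accept_prob \<mu> (\<lambda>e w. \<tau> < x e w) e" for e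
  have ab: "\<forall>e\<in>E. 0 \<le> b e \<and> b e \<le> a e \<and> a e \<le> 1"
  proof
    fix e assume "e \<in> E"
    have "b e \<le> a e" unfolding a_def b_def using fin_\<mu> \<open>e \<in> E\<close> by (intro accept_prob_mono) auto
    then show "0 \<le> b e \<and> b e \<le> a e \<and> a e \<le> 1" unfolding a_def b_def
      using accept_prob_bounds[of \<mu> "\<lambda>e w. \<tau> < x e w" e] accept_prob_bounds[of \<mu> "\<lambda>e w. \<tau> \<le> x e w" e]
      by linarith
  qed
  have a: "(\<Prod>e\<in>E. 1 - a e) \<le> 1 - p" and b: "1 - p \<le> (\<Prod>e\<in>E. 1 - b e)"
    using weak strict unfolding a_def b_def .
  obtain W where bound:
    "p * (\<tau> + M \<tau>) \<le> \<tau> * (1 - (\<Prod>e\<in>E. 1 - (if e \<in> W then a e else b e)))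
       + (\<Prod>e\<in>E. 1 - (if e \<in> W then a e else b e) / real k) * M \<tau>"
    using ex_tie_set[OF fin k p(2) \<tau> M[of \<tau>] ab a b] by blast
  have acc_eq: "accept_prob \<mu> (threshold_acc x (\<lambda>_. \<tau>) (\<lambda>e. e \<notin> W)) e = (if e \<in> W then a e else b e)"
    for e by (cases "e \<in> W") (simp_all add: threshold_acc_def a_def b_def accept_prob_def)
  have "p * (\<tau> + M \<tau>) \<le>
      \<tau> * (1 - (\<Prod>e\<in>E. 1 - accept_prob \<mu> (threshold_acc x (\<lambda>_. \<tau>) (\<lambda>e. e \<notin> W)) e))
       + (\<Prod>e\<in>E. 1 - accept_prob \<mu> (threshold_acc x (\<lambda>_. \<tau>) (\<lambda>e. e \<notin> W)) e / real k) * M \<tau>"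
    unfolding acc_eq by (rule bound)
  then show ?thesis by (rule that[OF \<tau>])
qed

section \<open>Guarantee of threshold mechanisms\<close>

lemma expectation_principal_ge:
  assumes fin: "finite E" and inj: "inj_on rk E" and k: "k > 0"
    and fin_\<mu>: "\<forall>e\<in>E. finite (set_pmf (\<mu> e))" and x_nonneg: "\<forall>e v. x e v \<ge> 0"
    and adv: "adversarial E k \<mu> x acc rk s"
    and acc_ge: "\<And>e v. acc e v \<Longrightarrow> \<tau> \<le> x e v" and gt_acc: "\<And>e v. \<tau> < x e v \<Longrightarrow> acc e v"
  shows "\<tau> * (1 - (\<Prod>e\<in>E. 1 - accept_prob \<mu> acc e))
           + (\<Prod>e\<in>E. 1 - accept_prob \<mu> acc e / real k) *
             (\<Sum>e\<in>E. measure_pmf.expectation (joint_pmf E k \<mu>) (\<lambda>\<omega>. top_gain E x rk \<tau> \<omega> e))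
         \<le> measure_pmf.expectation (joint_pmf E k \<mu>) (\<lambda>\<omega>. principal E k x acc rk \<omega> (profile_acts E s \<omega>))"
proof -
  let ?J = "joint_pmf E k \<mu>"
  have int: "integrable (measure_pmf ?J) f" for f :: "_ \<Rightarrow> real"
    using finite_set_joint_pmf[OF fin k fin_\<mu>] by (rule integrable_measure_pmf_finite)
  have "(\<Prod>e\<in>E. 1 - accept_prob \<mu> acc e / real k) *
          (\<Sum>e\<in>E. measure_pmf.expectation ?J (\<lambda>\<omega>. top_gain E x rk \<tau> \<omega> e))
        \<le> (\<Sum>e\<in>E. measure_pmf.expectation ?J (\<lambda>\<omega>. isolated_top_gain E x rk acc \<tau> \<omega> e))"
    unfolding sum_distrib_left
    using expectation_isolated_top_gain_ge[OF fin _ k fin_\<mu>, where x=x and \<tau>=\<tau> and acc=acc]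
      gt_acc by (intro sum_mono) blast
  then have "\<tau> * (1 - (\<Prod>e\<in>E. 1 - accept_prob \<mu> acc e))
           + (\<Prod>e\<in>E. 1 - accept_prob \<mu> acc e / real k) *
             (\<Sum>e\<in>E. measure_pmf.expectation ?J (\<lambda>\<omega>. top_gain E x rk \<tau> \<omega> e))
      \<le> measure_pmf.expectation ?J
           (\<lambda>\<omega>. \<tau> * of_bool (\<exists>e\<in>E. acc e (snd \<omega> e)) + (\<Sum>e\<in>E. isolated_top_gain E x rk acc \<tau> \<omega> e))"
    using int expectation_some_acceptable[OF fin fin_\<mu>, of k acc]
    by (simp add: Bochner_Integration.integral_add Bochner_Integration.integral_sum)
  also have "\<dots> \<le> measure_pmf.expectation ?J (\<lambda>\<omega>. principal E k x acc rk \<omega> (profile_acts E s \<omega>))"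
    using principal_ge_isolated_top_gains[OF fin inj k adv _ acc_ge gt_acc x_nonneg]
    by (intro integral_mono_AE int AE_pmfI)
  finally show ?thesis .
qed

lemma expectation_opt_le:
  assumes fin: "finite E" and inj: "inj_on rk E" and \<tau>: "0 \<le> \<tau>"
    and k: "k > 0" and fin_\<mu>: "\<forall>e\<in>E. finite (set_pmf (\<mu> e))"
  shows "measure_pmf.expectation (joint_pmf E k \<mu>) (opt E x)
    \<le> \<tau> + (\<Sum>e\<in>E. measure_pmf.expectation (joint_pmf E k \<mu>) (\<lambda>\<omega>. top_gain E x rk \<tau> \<omega> e))"
proof -
  let ?J = "joint_pmf E k \<mu>"
  have int: "integrable (measure_pmf ?J) f" for f :: "_ \<Rightarrow> real"
    using finite_set_joint_pmf[OF fin k fin_\<mu>] by (rule integrable_measure_pmf_finite)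
  have "measure_pmf.expectation ?J (opt E x)
      \<le> measure_pmf.expectation ?J (\<lambda>\<omega>. \<tau> + (\<Sum>e\<in>E. top_gain E x rk \<tau> \<omega> e))"
    using opt_le_top_gains[OF fin inj \<tau>] by (intro integral_mono int)
  also have "\<dots> = \<tau> + (\<Sum>e\<in>E. measure_pmf.expectation ?J (\<lambda>\<omega>. top_gain E x rk \<tau> \<omega> e))"
    using int by (simp add: Bochner_Integration.integral_add Bochner_Integration.integral_sum)
  finally show ?thesis .
qed

lemma ex_threshold_mechanism_guarantee:
  fixes x :: "'e \<Rightarrow> 'o \<Rightarrow> real"
  assumes fin: "finite E" and k: "k > 0" and p: "p > 0" "p ^ k + p - 1 = 0"
    and fin_\<mu>: "\<forall>e\<in>E. finite (set_pmf (\<mu> e))" and x_nonneg: "\<forall>e v. x e v \<ge> 0"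
    and inj: "inj_on rk E"
  obtains \<theta> strict where "\<And>s. adversarial E k \<mu> x (threshold_acc x \<theta> strict) rk s \<Longrightarrow>
    p * measure_pmf.expectation (joint_pmf E k \<mu>) (opt E x) \<le> measure_pmf.expectation (joint_pmf E k \<mu>)
      (\<lambda>\<omega>. principal E k x (threshold_acc x \<theta> strict) rk \<omega> (profile_acts E s \<omega>))"
proof (cases "E = {}")
  case True
  then have "opt E x = (\<lambda>_. 0)" by (simp add: opt_def fun_eq_iff)
  then show ?thesis using principal_nonneg[OF x_nonneg]
    by (intro that[of "\<lambda>_. 0" "\<lambda>_. False"]) (simp add: Bochner_Integration.integral_nonneg)
next
  case False
  define M where "M \<tau> = (\<Sum>e\<in>E. measure_pmf.expectation (joint_pmf E k \<mu>) (\<lambda>\<omega>. top_gain E x rk \<tau> \<omega> e))"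
    for \<tau>
  have "0 \<le> M \<tau>" for \<tau>
    unfolding M_def by (intro sum_nonneg Bochner_Integration.integral_nonneg top_gain_nonneg)
  then obtain \<tau> strict where \<tau>: "0 \<le> \<tau>" and bound:
    "p * (\<tau> + M \<tau>) \<le> \<tau> * (1 - (\<Prod>e\<in>E. 1 - accept_prob \<mu> (threshold_acc x (\<lambda>_. \<tau>) strict) e))
       + (\<Prod>e\<in>E. 1 - accept_prob \<mu> (threshold_acc x (\<lambda>_. \<tau>) strict) e / real k) * M \<tau>"
    using ex_threshold_params[OF fin False fin_\<mu> x_nonneg k p] by blast
  show ?thesis
  proof (rule that[of "\<lambda>_. \<tau>" strict])
    fix s assume adv: "adversarial E k \<mu> x (threshold_acc x (\<lambda>_. \<tau>) strict) rk s"
    have "p * measure_pmf.expectation (joint_pmf E k \<mu>) (opt E x) \<le> p * (\<tau> + M \<tau>)"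
      using expectation_opt_le[OF fin inj \<tau> k fin_\<mu>] p(1) unfolding M_def by simp
    also note bound
    also have "\<tau> * (1 - (\<Prod>e\<in>E. 1 - accept_prob \<mu> (threshold_acc x (\<lambda>_. \<tau>) strict) e))
       + (\<Prod>e\<in>E. 1 - accept_prob \<mu> (threshold_acc x (\<lambda>_. \<tau>) strict) e / real k) * M \<tau>
      \<le> measure_pmf.expectation (joint_pmf E k \<mu>)
           (\<lambda>\<omega>. principal E k x (threshold_acc x (\<lambda>_. \<tau>) strict) rk \<omega> (profile_acts E s \<omega>))"
      unfolding M_def
      by (rule expectation_principal_ge[OF fin inj k fin_\<mu> x_nonneg adv])
        (auto simp: threshold_acc_def split: if_splits)
    finally show "p * measure_pmf.expectation (joint_pmf E k \<mu>) (opt E x) \<le>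
        measure_pmf.expectation (joint_pmf E k \<mu>)
          (\<lambda>\<omega>. principal E k x (threshold_acc x (\<lambda>_. \<tau>) strict) rk \<omega> (profile_acts E s \<omega>))" .
  qed
qed

theorem mainTheorem2:
  fixes E :: "'e set" and k :: nat and p :: real
    and \<mu> :: "'e \<Rightarrow> 'o pmf" and x :: "'e \<Rightarrow> 'o \<Rightarrow> real"
  assumes "finite E"
    and "k > 0"
    and "p > 0" and "p ^ k + p - 1 = 0"
    and "\<forall>e\<in>E. finite (set_pmf (\<mu> e))"
    and "\<forall>e v. x e v \<ge> 0"
  shows "\<exists>(\<theta> :: 'e \<Rightarrow> real) (strict :: 'e \<Rightarrow> bool) (rk :: 'e \<Rightarrow> nat).
           inj_on rk E \<and>
           (\<forall>s. adversarial E k \<mu> x (threshold_acc x \<theta> strict) rk s \<longrightarrow>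
              measure_pmf.expectation (joint_pmf E k \<mu>)
                (\<lambda>\<omega>. principal E k x (threshold_acc x \<theta> strict) rk \<omega> (profile_acts E s \<omega>))
              \<ge> p * measure_pmf.expectation (joint_pmf E k \<mu>) (opt E x))"
proof -
  obtain rk :: "'e \<Rightarrow> nat" where inj: "inj_on rk E"
    using finite_imp_inj_to_nat_seg[OF assms(1)] by metis
  obtain \<theta> strict where "\<And>s. adversarial E k \<mu> x (threshold_acc x \<theta> strict) rk s \<Longrightarrow>
    p * measure_pmf.expectation (joint_pmf E k \<mu>) (opt E x) \<le> measure_pmf.expectation (joint_pmf E k \<mu>)
      (\<lambda>\<omega>. principal E k x (threshold_acc x \<theta> strict) rk \<omega> (profile_acts E s \<omega>))"
    using ex_threshold_mechanism_guarantee[OF assms inj] by blast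
  then show ?thesis using inj by (intro exI[of _ \<theta>] exI[of _ strict] exI[of _ rk] conjI allI impI)
qed

end
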